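(* Let $(S,\Delta,\mathbb{P})$ be a probability space, $(U,d)$ a separable metric space, $\mathfrak{X}$ the set of $U$-valued random variables on $S$, and suppose $\mathfrak{X}^0$ has at least two distinct elements. Let $\mathcal{I}$ be an admissible ideal on $\mathbb{N}$. Then $\mathcal{I}$ is maximal if and only if $\mathcal{I}^{\mathbb{P}}\text{-}LIM^r\underline{X}=\Gamma^{r^s}_{\underline{X}}(\mathcal{I}^{\mathbb{P}})$ for every $r\geq 0$ and every sequence $\underline{X}=\{X_n\}$ in $\mathfrak{X}$.
   Context: $\mathfrak{X}^0$ is the set of equivalence classes of $\mathfrak{X}$ under almost sure equality. An ideal on $\mathbb{N}$ is a family $\mathcal{I}\subseteq\mathcal{P}(\mathbb{N})$ with $\varnothing\in\mathcal{I}$, closed under finite unions and under subsets; it is admissible if $\mathbb{N}\notin\mathcal{I}$ and $\{t\}\in\mathcal{I}$ for every $t\in\mathbb{N}$; it is maximal if $\mathbb{N}\notin\mathcal{I}$ and there is no ideal $\mathcal{J}$ with $\mathcal{I}\subsetneq\mathcal{J}$ and $\mathbb{N}\notin\mathcal{J}$. $\mathcal{I}^{\mathbb{P}}\text{-}LIM^r\underline{X}$ is the set of $X_*\in\mathfrak{X}$ with $\{n:\mathbb{P}(d(X_n,X_* )>r+\varepsilon)>\delta\}\in\mathcal{I}$ for all $\varepsilon,\delta>0$; $\Gamma^{r^s}_{\underline{X}}(\mathcal{I}^{\mathbb{P}})$ is the set of $Y\in\mathfrak{X}$ with $\{n:\mathbb{P}(d(X_n,Y)<r+\varepsilon)>1-\delta\}\notin\mathcal{I}$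 for all $\varepsilon,\delta>0$. *)

theory Defs
  imports "HOL-Probability.Probability"
begin

definition ideal_on_nat :: "nat set set \<Rightarrow> bool" where
  "ideal_on_nat I \<longleftrightarrow> {} \<in> I \<and> (\<forall>A\<in>I. \<forall>B\<in>I. A \<union> B \<in> I) \<and> (\<forall>A\<in>I. \<forall>B. B \<subseteq> A \<longrightarrow> B \<in> I)"

definition admissible_ideal :: "nat set set \<Rightarrow> bool" where
  "admissible_ideal I \<longleftrightarrow> ideal_on_nat I \<and> UNIV \<notin> I \<and> (\<forall>t. {t} \<in> I)"

definition maximal_ideal_on_nat :: "nat set set \<Rightarrow> bool" where
  "maximal_ideal_on_nat I \<longleftrightarrow> ideal_on_nat I \<and> UNIV \<notin> I \<and>
     \<not> (\<exists>J. ideal_on_nat J \<and> I \<subset> J \<and> UNIV \<notin> J)"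

definition I_prob_LIM ::
  "'a measure \<Rightarrow> nat set set \<Rightarrow> real \<Rightarrow> (nat \<Rightarrow> 'a \<Rightarrow> 'b::metric_space) \<Rightarrow> ('a \<Rightarrow> 'b) set" where
  "I_prob_LIM M I r X = {Z \<in> borel_measurable M. \<forall>\<epsilon>>0. \<forall>\<delta>>0.
      {n. measure M {s \<in> space M. dist (X n s) (Z s) > r + \<epsilon>} > \<delta>} \<in> I}"

definition I_prob_Gamma ::
  "'a measure \<Rightarrow> nat set set \<Rightarrow> real \<Rightarrow> (nat \<Rightarrow> 'a \<Rightarrow> 'b::metric_space) \<Rightarrow> ('a \<Rightarrow> 'b) set" where
  "I_prob_Gamma M I r X = {Y \<in> borel_measurable M. \<forall>\<epsilon>>0. \<forall>\<delta>>0.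
      {n. measure M {s \<in> space M. dist (X n s) (Y s) < r + \<epsilon>} > 1 - \<delta>} \<notin> I}"

end

theory Submission
  imports Defs
begin

text \<open>A proper ideal \<open>I\<close> is maximal iff every \<open>A \<subseteq> \<nat>\<close> has \<open>A \<in> I\<close> or \<open>- A \<in> I\<close>. For each \<open>n\<close>,
  \<open>P(d(X\<^sub>n, Y) \<ge> r + \<epsilon>)\<close> and \<open>P(d(X\<^sub>n, Y) < r + \<epsilon>)\<close> add up to one, so the index set in the
  definition of \<open>\<Gamma>\<close> has, up to shrinking \<open>\<epsilon>\<close> and \<open>\<delta>\<close>, the index set in the definition of \<open>LIM\<close> as
  complement. Hence \<open>LIM \<subseteq> \<Gamma>\<close> for every proper ideal, and \<open>\<Gamma> \<subseteq> LIM\<close> as soon as complements of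
  sets outside \<open>I\<close> lie in \<open>I\<close>.\<close>

lemma dist_less_iff_dense_Rats:
  fixes x y :: "'b::metric_space"
  assumes "closure C = UNIV"
  shows "dist x y < c \<longleftrightarrow> (\<exists>d\<in>C. \<exists>a\<in>\<rat>. dist x d < a \<and> dist y d < c - a)"
proof
  assume xy: "dist x y < c"
  define e where "e = (c - dist x y) / 2"
  have "e > 0" using xy by (simp add: e_def)
  moreover have "x \<in> closure C" using assms by simp
  ultimately obtain d where d: "d \<in> C" "dist x d < e"
    unfolding closure_approachable by (auto simp: dist_commute)
  then obtain a where a: "a \<in> \<rat>" "dist x d < a" "a < e"
    using Rats_dense_in_real by blast
  have "dist y d < c - a"
    using dist_triangle[of y d x] a d by (simp add: e_def dist_commute)
  then show "\<exists>d\<in>C. \<exists>a\<in>\<rat>. dist x d < a \<and> dist y d < c - a"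
    using a d by blast
next
  assume "\<exists>d\<in>C. \<exists>a\<in>\<rat>. dist x d < a \<and> dist y d < c - a"
  then obtain d a where "dist x d < a" "dist y d < c - a" by blast
  then show "dist x y < c"
    using dist_triangle2[of x y d] by linarith
qed

text \<open>The library's \<open>borel_measurable_dist\<close> needs the type class \<open>second_countable_topology\<close>;
  here separability is only a hypothesis on the range.\<close>

lemma borel_measurable_dist_separable:
  fixes X Y :: "'a \<Rightarrow> 'b::metric_space"
  assumes "separable_space (euclidean :: 'b topology)"
    and X: "X \<in> borel_measurable M" and Y: "Y \<in> borel_measurable M"
  shows "(\<lambda>s. dist (X s) (Y s)) \<in> borel_measurable M"
proof (rule borel_measurable_iff_less[THEN iffD2], intro allI)
  fix c :: real
  obtain C :: "'b set" where C: "countable C" "closure C = UNIV"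
    using assms(1) unfolding separable_space_def by auto
  have "dist (X s) (Y s) < c \<longleftrightarrow> (\<exists>(d, a)\<in>C \<times> \<rat>. X s \<in> ball d a \<and> Y s \<in> ball d (c - a))"
    for s
    using dist_less_iff_dense_Rats[OF C(2), of "X s" "Y s" c] by (auto simp: dist_commute)
  then have "{s \<in> space M. dist (X s) (Y s) < c} =
      (\<Union>(d, a)\<in>C \<times> \<rat>. (X -` ball d a \<inter> space M) \<inter> (Y -` ball d (c - a) \<inter> space M))"
    by blast
  also have "\<dots> \<in> sets M"
    using C(1) countable_rat
    by (intro sets.countable_UN'') (auto intro!: sets.Int measurable_sets[OF X] measurable_sets[OF Y])
  finally show "{s \<in> space M. dist (X s) (Y s) < c} \<in> sets M" .
qed

lemma ideal_on_nat_Un: "ideal_on_nat I \<Longrightarrow> A \<in> I \<Longrightarrow> B \<in> I \<Longrightarrow> A \<union> B \<in> I"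
  unfolding ideal_on_nat_def by blast

lemma ideal_on_nat_subset: "ideal_on_nat I \<Longrightarrow> A \<in> I \<Longrightarrow> B \<subseteq> A \<Longrightarrow> B \<in> I"
  unfolding ideal_on_nat_def by blast

lemma ideal_on_nat_Compl_notin: "ideal_on_nat I \<Longrightarrow> UNIV \<notin> I \<Longrightarrow> - A \<in> I \<Longrightarrow> A \<notin> I"
  by (metis Compl_partition ideal_on_nat_Un)

lemma maximal_ideal_on_nat_iff:
  assumes I: "ideal_on_nat I" and proper: "UNIV \<notin> I"
  shows "maximal_ideal_on_nat I \<longleftrightarrow> (\<forall>A. A \<in> I \<or> - A \<in> I)"
proof
  assume max: "maximal_ideal_on_nat I"
  show "\<forall>A. A \<in> I \<or> - A \<in> I"
  proof (rule ccontr)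
    assume "\<not> (\<forall>A. A \<in> I \<or> - A \<in> I)"
    then obtain A where A: "A \<notin> I" "- A \<notin> I" by blast
    define J where "J = {B. \<exists>C\<in>I. B \<subseteq> C \<union> A}"
    have "{} \<in> I" using I unfolding ideal_on_nat_def by blast
    have "ideal_on_nat J"
      unfolding ideal_on_nat_def
    proof (intro conjI ballI allI impI)
      show "{} \<in> J" using \<open>{} \<in> I\<close> unfolding J_def by blast
    next
      fix B B' assume "B \<in> J" "B' \<in> J"
      then obtain C C' where "C \<in> I" "C' \<in> I" "B \<subseteq> C \<union> A" "B' \<subseteq> C' \<union> A"
        unfolding J_def by blast
      then show "B \<union> B' \<in> J"
        using ideal_on_nat_Un[OF I, of C C'] unfolding J_def by blast
    next
      fix B B' assume "B \<in> J" "B' \<subseteq> B"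
      then show "B' \<in> J" unfolding J_def by blast
    qed
    moreover have "I \<subset> J"
    proof -
      have "I \<subseteq> J" unfolding J_def by blast
      moreover have "A \<in> J" using \<open>{} \<in> I\<close> unfolding J_def by blast
      ultimately show ?thesis using A(1) by blast
    qed
    moreover have "UNIV \<notin> J"
    proof
      assume "UNIV \<in> J"
      then obtain C where "C \<in> I" "- A \<subseteq> C" unfolding J_def by blast
      then show False using A(2) ideal_on_nat_subset[OF I] by blast
    qed
    ultimately show False using max unfolding maximal_ideal_on_nat_def by blast
  qed
next
  assume dich: "\<forall>A. A \<in> I \<or> - A \<in> I"
  have "\<not> ideal_on_nat J" if "I \<subset> J" "UNIV \<notin> J" for J
  proof
    assume J: "ideal_on_nat J"
    obtain A where "A \<in> J" "A \<notin> I" using \<open>I \<subset> J\<close> by blast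
    then have "A \<union> - A \<in> J" using dich \<open>I \<subset> J\<close> ideal_on_nat_Un[OF J] by blast
    then show False using \<open>UNIV \<notin> J\<close> by simp
  qed
  then show "maximal_ideal_on_nat I"
    using I proper unfolding maximal_ideal_on_nat_def by blast
qed

lemma (in prob_space) prob_less_eq_one_minus_prob_ge:
  fixes f :: "'a \<Rightarrow> real"
  assumes "f \<in> borel_measurable M"
  shows "prob {s \<in> space M. f s < a} = 1 - prob {s \<in> space M. a \<le> f s}"
proof -
  have "{s \<in> space M. a \<le> f s} \<in> events"
    using assms by measurable
  then show ?thesis
    using prob_neg[of "\<lambda>s. a \<le> f s"] by (simp add: not_le)
qed

lemma (in prob_space) one_minus_prob_greater_le_prob_less:
  fixes f :: "'a \<Rightarrow> real"
  assumes "f \<in> borel_measurable M" and "b < a"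
  shows "1 - prob {s \<in> space M. f s > b} \<le> prob {s \<in> space M. f s < a}"
proof -
  have "prob {s \<in> space M. a \<le> f s} \<le> prob {s \<in> space M. f s > b}"
    using assms by (intro finite_measure_mono) auto
  then show ?thesis
    using prob_less_eq_one_minus_prob_ge[OF assms(1)] by simp
qed

lemma (in prob_space) prob_greater_le_one_minus_prob_less:
  fixes f :: "'a \<Rightarrow> real"
  assumes "f \<in> borel_measurable M"
  shows "prob {s \<in> space M. f s > a} \<le> 1 - prob {s \<in> space M. f s < a}"
proof -
  have "prob {s \<in> space M. f s > a} \<le> prob {s \<in> space M. a \<le> f s}"
    using assms by (intro finite_measure_mono) auto
  then show ?thesis
    using prob_less_eq_one_minus_prob_ge[OF assms] by simp
qed

lemma (in finite_measure) exists_measure_greater_pos: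
  fixes f :: "'a \<Rightarrow> real"
  assumes f: "f \<in> borel_measurable M" and "\<not> (AE s in M. f s \<le> 0)"
  shows "\<exists>e>0. measure M {s \<in> space M. f s > e} > 0"
proof (rule ccontr)
  assume "\<not> ?thesis"
  then have "measure M {s \<in> space M. f s > inverse (real (Suc k))} = 0" for k
    by (metis measure_nonneg inverse_positive_iff_positive of_nat_0_less_iff zero_less_Suc
        order_less_le)
  then have "{s \<in> space M. f s > inverse (real (Suc k))} \<in> null_sets M" for k
    using f by (simp add: emeasure_eq_measure null_sets_def)
  then have "(\<Union>k. {s \<in> space M. f s > inverse (real (Suc k))}) \<in> null_sets M"
    by (rule null_sets_UN)
  moreover have "{s \<in> space M. \<not> f s \<le> 0} \<subseteq> (\<Union>k. {s \<in> space M. f s > inverse (real (Suc k))})"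
    using reals_Archimedean by (auto simp: not_le)
  ultimately have "AE s in M. f s \<le> 0" by (rule AE_I')
  with assms(2) show False by simp
qed

lemma I_prob_LIM_subset_I_prob_Gamma:
  fixes X :: "nat \<Rightarrow> 'a \<Rightarrow> 'b::metric_space"
  assumes "prob_space M" and sep: "separable_space (euclidean :: 'b topology)"
    and X: "\<And>n. X n \<in> borel_measurable M"
    and I: "ideal_on_nat I" and proper: "UNIV \<notin> I"
  shows "I_prob_LIM M I r X \<subseteq> I_prob_Gamma M I r X"
proof
  interpret prob_space M by fact
  fix Z assume "Z \<in> I_prob_LIM M I r X"
  then have Z: "Z \<in> borel_measurable M" and lim: "\<And>e d. e > 0 \<Longrightarrow> d > 0 \<Longrightarrow>
      {n. prob {s \<in> space M. dist (X n s) (Z s) > r + e} > d} \<in> I"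
    unfolding I_prob_LIM_def by auto
  have "{n. prob {s \<in> space M. dist (X n s) (Z s) < r + e} > 1 - d} \<notin> I"
    if e: "e > 0" and d: "d > 0" for e d :: real
  proof (rule ideal_on_nat_Compl_notin[OF I proper])
    have "- {n. prob {s \<in> space M. dist (X n s) (Z s) < r + e} > 1 - d}
        \<subseteq> {n. prob {s \<in> space M. dist (X n s) (Z s) > r + e / 2} > d / 2}"
    proof
      fix n assume "n \<in> - {n. prob {s \<in> space M. dist (X n s) (Z s) < r + e} > 1 - d}"
      moreover have "1 - prob {s \<in> space M. dist (X n s) (Z s) > r + e / 2}
          \<le> prob {s \<in> space M. dist (X n s) (Z s) < r + e}"
        using e by (intro one_minus_prob_greater_le_prob_less borel_measurable_dist_separable sep X Z)
          simp
      ultimately show "n \<in> {n. prob {s \<in> space M. dist (X n s) (Z s) > r + e / 2} > d / 2}"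
        using d by simp
    qed
    then show "- {n. prob {s \<in> space M. dist (X n s) (Z s) < r + e} > 1 - d} \<in> I"
      using lim[of "e / 2" "d / 2"] e d ideal_on_nat_subset[OF I] by auto
  qed
  then show "Z \<in> I_prob_Gamma M I r X"
    using Z unfolding I_prob_Gamma_def by auto
qed

lemma I_prob_Gamma_subset_I_prob_LIM:
  fixes X :: "nat \<Rightarrow> 'a \<Rightarrow> 'b::metric_space"
  assumes "prob_space M" and sep: "separable_space (euclidean :: 'b topology)"
    and X: "\<And>n. X n \<in> borel_measurable M"
    and I: "ideal_on_nat I" and dich: "\<And>A. A \<in> I \<or> - A \<in> I"
  shows "I_prob_Gamma M I r X \<subseteq> I_prob_LIM M I r X"
proof
  interpret prob_space M by fact
  fix Z assume "Z \<in> I_prob_Gamma M I r X"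
  then have Z: "Z \<in> borel_measurable M" and cluster: "\<And>e d. e > 0 \<Longrightarrow> d > 0 \<Longrightarrow>
      {n. prob {s \<in> space M. dist (X n s) (Z s) < r + e} > 1 - d} \<notin> I"
    unfolding I_prob_Gamma_def by auto
  have "{n. prob {s \<in> space M. dist (X n s) (Z s) > r + e} > d} \<in> I"
    if e: "e > 0" and d: "d > 0" for e d :: real
  proof (rule ideal_on_nat_subset[OF I])
    show "- {n. prob {s \<in> space M. dist (X n s) (Z s) < r + e} > 1 - d} \<in> I"
      using cluster[OF e d] dich by blast
    show "{n. prob {s \<in> space M. dist (X n s) (Z s) > r + e} > d}
        \<subseteq> - {n. prob {s \<in> space M. dist (X n s) (Z s) < r + e} > 1 - d}"
    proof
      fix n assume "n \<in> {n. prob {s \<in> space M. dist (X n s) (Z s) > r + e} > d}"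
      moreover have "prob {s \<in> space M. dist (X n s) (Z s) > r + e}
          \<le> 1 - prob {s \<in> space M. dist (X n s) (Z s) < r + e}"
        by (intro prob_greater_le_one_minus_prob_less borel_measurable_dist_separable sep X Z)
      ultimately show "n \<in> - {n. prob {s \<in> space M. dist (X n s) (Z s) < r + e} > 1 - d}"
        by simp
    qed
  qed
  then show "Z \<in> I_prob_LIM M I r X"
    using Z unfolding I_prob_LIM_def by auto
qed

text \<open>If neither \<open>A\<close> nor its complement is small, the sequence that equals \<open>X\<^sub>0\<close> on \<open>A\<close> and
  \<open>Y\<^sub>0\<close> off \<open>A\<close> clusters at \<open>X\<^sub>0\<close> (along \<open>A\<close>) but does not converge to it (along \<open>- A\<close>).\<close>

lemma I_prob_LIM_ne_I_prob_Gamma_if_split: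
  fixes X\<^sub>0 Y\<^sub>0 :: "'a \<Rightarrow> 'b::metric_space"
  assumes "prob_space M" and sep: "separable_space (euclidean :: 'b topology)"
    and X\<^sub>0: "X\<^sub>0 \<in> borel_measurable M" and Y\<^sub>0: "Y\<^sub>0 \<in> borel_measurable M"
    and ne: "\<not> (AE s in M. X\<^sub>0 s = Y\<^sub>0 s)"
    and I: "ideal_on_nat I" and A: "A \<notin> I" "- A \<notin> I"
  defines "X \<equiv> \<lambda>n. if n \<in> A then X\<^sub>0 else Y\<^sub>0"
  shows "I_prob_LIM M I 0 X \<noteq> I_prob_Gamma M I 0 X"
proof -
  interpret prob_space M by fact
  have "X\<^sub>0 \<in> I_prob_Gamma M I 0 X"
  proof -
    have "A \<subseteq> {n. prob {s \<in> space M. dist (X n s) (X\<^sub>0 s) < 0 + e} > 1 - d}"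
      if "e > 0" "d > 0" for e d :: real
      using that by (auto simp: X_def prob_space)
    then show ?thesis
      using X\<^sub>0 A(1) ideal_on_nat_subset[OF I] unfolding I_prob_Gamma_def by blast
  qed
  moreover have "X\<^sub>0 \<notin> I_prob_LIM M I 0 X"
  proof
    assume lim: "X\<^sub>0 \<in> I_prob_LIM M I 0 X"
    have "\<not> (AE s in M. dist (Y\<^sub>0 s) (X\<^sub>0 s) \<le> 0)"
      using ne by (simp add: eq_commute)
    then obtain e where e: "e > 0"
      and pos: "prob {s \<in> space M. dist (Y\<^sub>0 s) (X\<^sub>0 s) > e} > 0"
      using exists_measure_greater_pos borel_measurable_dist_separable[OF sep Y\<^sub>0 X\<^sub>0] by blast
    define p where "p = prob {s \<in> space M. dist (Y\<^sub>0 s) (X\<^sub>0 s) > e}"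
    have "- A \<subseteq> {n. prob {s \<in> space M. dist (X n s) (X\<^sub>0 s) > 0 + e} > p / 2}"
      using pos by (auto simp: X_def p_def)
    moreover have "{n. prob {s \<in> space M. dist (X n s) (X\<^sub>0 s) > 0 + e} > p / 2} \<in> I"
    proof -
      have "p / 2 > 0" using pos by (simp add: p_def)
      then show ?thesis using lim e unfolding I_prob_LIM_def by blast
    qed
    ultimately show False
      using A(2) ideal_on_nat_subset[OF I] by blast
  qed
  ultimately show ?thesis by blast
qed

theorem theorem3p15:
  fixes M :: "'a measure" and I :: "nat set set"
  assumes "prob_space M"
    and "separable_space (euclidean :: 'b::metric_space topology)"
    and "\<exists>X Y :: 'a \<Rightarrow> 'b. X \<in> borel_measurable M \<and> Y \<in> borel_measurable M \<and>
           \<not> (AE s in M. X s = Y s)"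
    and "admissible_ideal I"
  shows "maximal_ideal_on_nat I \<longleftrightarrow>
    (\<forall>r::real. r \<ge> 0 \<longrightarrow> (\<forall>X :: nat \<Rightarrow> 'a \<Rightarrow> 'b. (\<forall>n. X n \<in> borel_measurable M) \<longrightarrow>
        I_prob_LIM M I r X = I_prob_Gamma M I r X))"
proof -
  have I: "ideal_on_nat I" and proper: "UNIV \<notin> I"
    using assms(4) by (auto simp: admissible_ideal_def)
  show ?thesis
    unfolding maximal_ideal_on_nat_iff[OF I proper]
  proof (intro iffI allI impI)
    fix r :: real and X :: "nat \<Rightarrow> 'a \<Rightarrow> 'b"
    assume "\<forall>A. A \<in> I \<or> - A \<in> I" and "\<forall>n. X n \<in> borel_measurable M"
    then show "I_prob_LIM M I r X = I_prob_Gamma M I r X"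
      using I_prob_LIM_subset_I_prob_Gamma[OF assms(1,2) _ I proper]
        I_prob_Gamma_subset_I_prob_LIM[OF assms(1,2) _ I] by blast
  next
    fix A
    assume eq: "\<forall>r\<ge>0. \<forall>X :: nat \<Rightarrow> 'a \<Rightarrow> 'b. (\<forall>n. X n \<in> borel_measurable M) \<longrightarrow>
        I_prob_LIM M I r X = I_prob_Gamma M I r X"
    obtain X\<^sub>0 Y\<^sub>0 :: "'a \<Rightarrow> 'b" where "X\<^sub>0 \<in> borel_measurable M" "Y\<^sub>0 \<in> borel_measurable M"
      and "\<not> (AE s in M. X\<^sub>0 s = Y\<^sub>0 s)"
      using assms(3) by blast
    then show "A \<in> I \<or> - A \<in> I"
      using I_prob_LIM_ne_I_prob_Gamma_if_split[OF assms(1,2) _ _ _ I, of X\<^sub>0 Y\<^sub>0 A] eq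
      by auto
  qed
qed

end
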